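(* Consider a resource theory with a class $\mathbb{O}$ of free operations, and let $\mathfrak{R}$ be a nonnegative function on states that is monotone ($\mathfrak{R}(\Lambda(\omega))\le\mathfrak{R}(\omega)$ for all $\Lambda\in\mathbb{O}$), tensor-product additive ($\mathfrak{R}(\omega\otimes\omega')=\mathfrak{R}(\omega)+\mathfrak{R}(\omega')$) and superadditive ($\mathfrak{R}(\tau)\ge\mathfrak{R}(\mathrm{Tr}_B\tau)+\mathfrak{R}(\mathrm{Tr}_A\tau)$ for every state $\tau$ on $AB$). Then for all states $\rho,\rho'$ and every $r<\tilde R^0(\rho\to\rho')$, one has $\mathfrak{R}(\rho)\ge r\,\mathfrak{R}(\rho')$; i.e., $\mathfrak{R}(\rho)\ge\tilde R^0(\rho\to\rho')\,\mathfrak{R}(\rho')$.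
   Context: $\tilde R^0(\rho\to\rho')=\limsup_{n\to\infty}\sup\{r:\exists\Lambda_n\in\mathbb{O},\ \Lambda_n:S^{\otimes n}\to S'^{\otimes\lfloor rn\rfloor},\ \mathrm{Tr}_{\setminus i}\Lambda_n(\rho^{\otimes n})=\rho'\ \forall i\}$, where $\mathrm{Tr}_{\setminus i}$ is the reduced state on the $i$-th output copy. *)

theory Defs
  imports "HOL-Analysis.Analysis" "HOL-Library.Extended_Real"
begin

text \<open>Finite-dimensional quantum systems are identified with their dimension d.
  An operator on a d-dimensional system is a function nat => nat => complex
  (matrix entries), required to vanish outside the index range d x d.\<close>

type_synonym cmat = "nat \<Rightarrow> nat \<Rightarrow> complex"

definition is_state :: "nat \<Rightarrow> cmat \<Rightarrow> bool" where
  "is_state d \<rho> \<longleftrightarrow>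
     (\<forall>i j. (d \<le> i \<or> d \<le> j) \<longrightarrow> \<rho> i j = 0) \<and>
     (\<forall>i<d. \<forall>j<d. \<rho> j i = cnj (\<rho> i j)) \<and>
     (\<forall>v :: nat \<Rightarrow> complex. 0 \<le> Re (\<Sum>i<d. \<Sum>j<d. cnj (v i) * \<rho> i j * v j)) \<and>
     (\<Sum>i<d. \<rho> i i) = 1"

text \<open>Tensor product of an operator on A (dim dA) and one on B (dim dB);
  index of AB is a*dB + b.\<close>
definition tensor :: "nat \<Rightarrow> nat \<Rightarrow> cmat \<Rightarrow> cmat \<Rightarrow> cmat" where
  "tensor dA dB \<rho> \<sigma> = (\<lambda>i j. if i < dA * dB \<and> j < dA * dB
      then \<rho> (i div dB) (j div dB) * \<sigma> (i mod dB) (j mod dB) else 0)"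

definition ptrace_B :: "nat \<Rightarrow> nat \<Rightarrow> cmat \<Rightarrow> cmat" where
  "ptrace_B dA dB \<tau> = (\<lambda>a b. if a < dA \<and> b < dA
      then (\<Sum>k<dB. \<tau> (a * dB + k) (b * dB + k)) else 0)"

definition ptrace_A :: "nat \<Rightarrow> nat \<Rightarrow> cmat \<Rightarrow> cmat" where
  "ptrace_A dA dB \<tau> = (\<lambda>a b. if a < dB \<and> b < dB
      then (\<Sum>k<dA. \<tau> (k * dB + a) (k * dB + b)) else 0)"

text \<open>n-fold tensor power (on dimension d^n); copy 0 is the leftmost factor.\<close>
fun tpow :: "nat \<Rightarrow> nat \<Rightarrow> cmat \<Rightarrow> cmat" where
  "tpow d 0 \<rho> = (\<lambda>i j. if i = 0 \<and> j = 0 then 1 else 0)"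
| "tpow d (Suc n) \<rho> = tensor d (d ^ n) \<rho> (tpow d n \<rho>)"

text \<open>k-th base-d digit of an index of a system of m copies (copy 0 most significant).\<close>
definition digit :: "nat \<Rightarrow> nat \<Rightarrow> nat \<Rightarrow> nat \<Rightarrow> nat" where
  "digit d m k x = (x div d ^ (m - 1 - k)) mod d"

text \<open>Reduced state on the k-th copy of an operator on m copies of a d-dim system
  (partial trace over all other copies).\<close>
definition marg :: "nat \<Rightarrow> nat \<Rightarrow> nat \<Rightarrow> cmat \<Rightarrow> cmat" where
  "marg d m k \<omega> = (\<lambda>a b. if a < d \<and> b < d then
      (\<Sum>x<d ^ m. \<Sum>y<d ^ m.
         if digit d m k x = a \<and> digit d m k y = b \<and>
            (\<forall>l<m. l \<noteq> k \<longrightarrow> digit d m l x = digit d m l y)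
         then \<omega> x y else 0)
      else 0)"

text \<open>A class of operations: triples (input dimension, output dimension, map).\<close>
type_synonym ops = "(nat \<times> nat \<times> (cmat \<Rightarrow> cmat)) set"

text \<open>r is an achievable rate at blocklength n: some free operation maps
  rho^{(x)n} on S^{(x)n} to S'^{(x) floor(r n)} with every single-copy marginal equal to rho'.\<close>
definition achievable :: "ops \<Rightarrow> nat \<Rightarrow> cmat \<Rightarrow> nat \<Rightarrow> cmat \<Rightarrow> nat \<Rightarrow> real \<Rightarrow> bool" where
  "achievable Ops d \<rho> d' \<rho>' n r \<longleftrightarrow> 0 \<le> r \<and>
     (\<exists>\<Lambda>. (d ^ n, d' ^ nat \<lfloor>r * real n\<rfloor>, \<Lambda>) \<in> Ops \<and>
        (\<forall>i < nat \<lfloor>r * real n\<rfloor>.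
            marg d' (nat \<lfloor>r * real n\<rfloor>) i (\<Lambda> (tpow d n \<rho>)) = \<rho>'))"

definition Rtilde0 :: "ops \<Rightarrow> nat \<Rightarrow> cmat \<Rightarrow> nat \<Rightarrow> cmat \<Rightarrow> ereal" where
  "Rtilde0 Ops d \<rho> d' \<rho>' =
     limsup (\<lambda>n. Sup {ereal r | r. achievable Ops d \<rho> d' \<rho>' n r})"

end

theory Submission
  imports Defs
begin

text \<open>By additivity, the monotone takes the value \<open>n R(\<rho>)\<close> on the \<open>n\<close>-fold tensor power of
  \<open>\<rho>\<close>. Peeling off one copy at a time with superadditivity shows that a state on \<open>m\<close> copies
  all of whose single-copy marginals equal \<open>\<rho>'\<close> has value at least \<open>m R(\<rho>')\<close>. So a free
  operation realising rate \<open>q\<close> at blocklength \<open>n\<close> gives \<open>\<lfloor>q n\<rfloor> R(\<rho>') \<le> n R(\<rho>)\<close> by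
  monotonicity, and rates above \<open>r\<close> occur at arbitrarily large \<open>n\<close>, where the rounding loss
  vanishes. Applying the hypotheses needs that tensor powers and partial traces of states are
  states; positivity of a tensor product comes from a Gram decomposition of positive
  semidefinite matrices, obtained by Cholesky-style elimination.\<close>

lemma sum_lessThan_mult:
  fixes f :: "nat \<Rightarrow> 'a::comm_monoid_add"
  shows "(\<Sum>i<m * n. f i) = (\<Sum>a<m. \<Sum>b<n. f (a * n + b))"
  by (simp add: sum.nat_group[symmetric, of _ m n] sum.atLeastLessThan_shift_0 atLeast0LessThan)

section \<open>Positive semidefinite matrices\<close>

definition quad_form :: "nat \<Rightarrow> cmat \<Rightarrow> (nat \<Rightarrow> complex) \<Rightarrow> complex" where
  "quad_form d \<sigma> v = (\<Sum>i<d. \<Sum>j<d. cnj (v i) * \<sigma> i j * v j)"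

definition hermitian :: "nat \<Rightarrow> cmat \<Rightarrow> bool" where
  "hermitian d \<sigma> \<longleftrightarrow> (\<forall>i<d. \<forall>j<d. \<sigma> j i = cnj (\<sigma> i j))"

definition pos_semidef :: "nat \<Rightarrow> cmat \<Rightarrow> bool" where
  "pos_semidef d \<sigma> \<longleftrightarrow> (\<forall>v. 0 \<le> Re (quad_form d \<sigma> v))"

lemma is_state_iff:
  "is_state d \<rho> \<longleftrightarrow> (\<forall>i j. (d \<le> i \<or> d \<le> j) \<longrightarrow> \<rho> i j = 0) \<and> hermitian d \<rho> \<and>
     pos_semidef d \<rho> \<and> (\<Sum>i<d. \<rho> i i) = 1"
  unfolding is_state_def pos_semidef_def quad_form_def hermitian_def by blast

lemma quad_form_add_unit:
  assumes "s < d"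
  shows "quad_form d \<sigma> (\<lambda>i. v i + (if i = s then t else 0)) =
    quad_form d \<sigma> v + cnj t * (\<Sum>j<d. \<sigma> s j * v j) + t * (\<Sum>i<d. cnj (v i) * \<sigma> i s)
      + cnj t * \<sigma> s s * t"
proof -
  have "quad_form d \<sigma> (\<lambda>i. v i + (if i = s then t else 0)) =
     (\<Sum>i<d. \<Sum>j<d. cnj (v i) * \<sigma> i j * v j + (if j = s then cnj (v i) * \<sigma> i s * t else 0)
        + (if i = s then cnj t * \<sigma> s j * v j else 0)
        + (if i = s \<and> j = s then cnj t * \<sigma> s s * t else 0))"
    unfolding quad_form_def by (intro sum.cong refl) (auto simp: algebra_simps)
  also have "\<dots> = quad_form d \<sigma> v + (\<Sum>i<d. \<Sum>j<d. if j = s then cnj (v i) * \<sigma> i s * t else 0)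
     + (\<Sum>i<d. \<Sum>j<d. if i = s then cnj t * \<sigma> s j * v j else 0)
     + (\<Sum>i<d. \<Sum>j<d. if i = s \<and> j = s then cnj t * \<sigma> s s * t else 0)"
    by (simp add: sum.distrib quad_form_def)
  also have "\<dots> = quad_form d \<sigma> v + cnj t * (\<Sum>j<d. \<sigma> s j * v j) + t * (\<Sum>i<d. cnj (v i) * \<sigma> i s)
      + cnj t * \<sigma> s s * t"
  proof -
    have "(\<Sum>i<d. \<Sum>j<d. if j = s then cnj (v i) * \<sigma> i s * t else 0) =
        t * (\<Sum>i<d. cnj (v i) * \<sigma> i s)"
      using assms by (simp add: sum_distrib_left mult.commute mult.left_commute)
    moreover have "(\<Sum>i<d. \<Sum>j<d. if i = s then cnj t * \<sigma> s j * v j else 0) =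
        cnj t * (\<Sum>j<d. \<sigma> s j * v j)"
      using assms by (subst sum.swap) (simp add: sum_distrib_left mult.assoc)
    moreover have "(\<Sum>i<d. \<Sum>j<d. if i = s \<and> j = s then cnj t * \<sigma> s s * t else 0)
        = (\<Sum>i<d. if i = s then (\<Sum>j<d. if j = s then cnj t * \<sigma> s s * t else 0) else 0)"
      by (intro sum.cong) auto
    ultimately show ?thesis using assms by (simp add: algebra_simps)
  qed
  finally show ?thesis .
qed

lemma Re_quad_form_add_unit:
  assumes "s < d" "hermitian d \<sigma>"
  shows "Re (quad_form d \<sigma> (\<lambda>i. v i + (if i = s then t else 0))) =
    Re (quad_form d \<sigma> v) + 2 * Re (cnj t * (\<Sum>j<d. \<sigma> s j * v j)) + (cmod t)\<^sup>2 * Re (\<sigma> s s)"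
proof -
  define g where "g = (\<Sum>j<d. \<sigma> s j * v j)"
  have "\<sigma> i s = cnj (\<sigma> s i)" if "i < d" for i
    using assms that unfolding hermitian_def by blast
  then have "(\<Sum>i<d. cnj (v i) * \<sigma> i s) = cnj g"
    unfolding g_def by (auto intro!: sum.cong)
  moreover have "cnj t * \<sigma> s s * t = \<sigma> s s * of_real ((cmod t)\<^sup>2)"
    by (metis complex_norm_square mult.commute mult.left_commute)
  ultimately have "quad_form d \<sigma> (\<lambda>i. v i + (if i = s then t else 0)) =
      quad_form d \<sigma> v + cnj t * g + t * cnj g + \<sigma> s s * of_real ((cmod t)\<^sup>2)"
    using quad_form_add_unit[OF assms(1), of \<sigma> v t] unfolding g_def by simp
  moreover have "Re (t * cnj g) = Re (cnj t * g)" by simp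
  ultimately show ?thesis unfolding g_def[symmetric] by simp
qed

definition vanishes_before :: "nat \<Rightarrow> nat \<Rightarrow> cmat \<Rightarrow> bool" where
  "vanishes_before s d \<sigma> \<longleftrightarrow> (\<forall>i<d. \<forall>j<d. i < s \<or> j < s \<longrightarrow> \<sigma> i j = 0)"

lemma pos_semidef_pivot_ineq:
  assumes "hermitian d \<sigma>" "pos_semidef d \<sigma>" "s < d"
  shows "0 \<le> Re (quad_form d \<sigma> v) + 2 * Re (cnj t * (\<Sum>j<d. \<sigma> s j * v j)) + (cmod t)\<^sup>2 * Re (\<sigma> s s)"
proof -
  have "0 \<le> Re (quad_form d \<sigma> (\<lambda>i. v i + (if i = s then t else 0)))"
    using assms(2) unfolding pos_semidef_def by blast
  then show ?thesis using Re_quad_form_add_unit[OF assms(3,1)] by simp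
qed

lemma pos_semidef_zero_pivot:
  assumes herm: "hermitian d \<sigma>" and psd: "pos_semidef d \<sigma>" and van: "vanishes_before s d \<sigma>"
    and "s < d" and zero: "\<sigma> s s = 0"
  shows "vanishes_before (Suc s) d \<sigma>"
proof -
  have row: "\<sigma> s j = 0" if "j < d" for j
  proof (rule ccontr)
    assume ne: "\<sigma> s j \<noteq> 0"
    define v where "v = (\<lambda>i::nat. if i = j then (1::complex) else 0)"
    have "cnj (v i) * \<sigma> i k * v k = (if k = j then if i = j then \<sigma> i j else 0 else 0)" for i k
      by (simp add: v_def)
    then have "quad_form d \<sigma> v = \<sigma> j j"
      using that by (simp add: quad_form_def)
    moreover have "(\<Sum>k<d. \<sigma> s k * v k) = \<sigma> s j"
      using that by (simp add: v_def if_distrib cong: if_cong)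
    ultimately have ineq: "0 \<le> Re (\<sigma> j j) + 2 * Re (cnj t * \<sigma> s j)" for t
      using pos_semidef_pivot_ineq[OF herm psd \<open>s < d\<close>, of v t] zero by simp
    define c where "c = (cmod (\<sigma> s j))\<^sup>2"
    have "c > 0" using ne by (simp add: c_def)
    define a where "a = (\<bar>Re (\<sigma> j j)\<bar> + 1) / (2 * c)"
    \<comment> \<open>\<open>t = -a \<sigma> s j\<close> pushes the right-hand side of \<open>ineq\<close> below zero\<close>
    have "Re (cnj (- of_real a * \<sigma> s j) * \<sigma> s j) = - a * c"
      unfolding c_def cmod_power2 by (simp add: algebra_simps power2_eq_square)
    moreover have "2 * (a * c) = \<bar>Re (\<sigma> j j)\<bar> + 1" using \<open>c > 0\<close> by (simp add: a_def)
    ultimately show False using ineq[of "- of_real a * \<sigma> s j"] by linarith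
  qed
  show ?thesis unfolding vanishes_before_def
  proof (intro allI impI)
    fix i j assume ij: "i < d" "j < d" and "i < Suc s \<or> j < Suc s"
    then consider "i < s \<or> j < s" | "i = s" | "j = s" by linarith
    then show "\<sigma> i j = 0"
    proof cases
      case 1 then show ?thesis using van ij unfolding vanishes_before_def by blast
    next
      case 2 then show ?thesis using row ij by simp
    next
      case 3
      have "\<sigma> i s = cnj (\<sigma> s i)" using herm \<open>s < d\<close> ij(1) unfolding hermitian_def by blast
      then show ?thesis using 3 row[OF ij(1)] by simp
    qed
  qed
qed

definition deflate :: "nat \<Rightarrow> cmat \<Rightarrow> cmat" where
  "deflate s \<sigma> = (\<lambda>i j. \<sigma> i j - \<sigma> i s * cnj (\<sigma> j s) / \<sigma> s s)"

lemma pos_semidef_pivot_real: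
  assumes "hermitian d \<sigma>" "pos_semidef d \<sigma>" "s < d"
  shows "\<sigma> s s = of_real (Re (\<sigma> s s))" "0 \<le> Re (\<sigma> s s)"
proof -
  have "\<sigma> s s = cnj (\<sigma> s s)" using assms(1,3) unfolding hermitian_def by blast
  then show "\<sigma> s s = of_real (Re (\<sigma> s s))" by (simp add: complex_eq_iff)
  show "0 \<le> Re (\<sigma> s s)"
    using pos_semidef_pivot_ineq[OF assms, of "\<lambda>_. 0" 1] by (simp add: quad_form_def)
qed

lemma hermitian_deflate:
  assumes "hermitian d \<sigma>" "s < d"
  shows "hermitian d (deflate s \<sigma>)"
  unfolding hermitian_def
proof (intro allI impI)
  fix i j assume "i < d" "j < d"
  then have "\<sigma> j i = cnj (\<sigma> i j)" "\<sigma> s i = cnj (\<sigma> i s)" "\<sigma> s j = cnj (\<sigma> j s)"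
      "\<sigma> s s = cnj (\<sigma> s s)"
    using assms unfolding hermitian_def by blast+
  then show "deflate s \<sigma> j i = cnj (deflate s \<sigma> i j)"
    unfolding deflate_def by (simp add: mult.commute)
qed

lemma vanishes_before_deflate:
  assumes "hermitian d \<sigma>" "vanishes_before s d \<sigma>" "s < d" "\<sigma> s s \<noteq> 0"
  shows "vanishes_before (Suc s) d (deflate s \<sigma>)"
  unfolding vanishes_before_def
proof (intro allI impI)
  fix i j assume ij: "i < d" "j < d" and "i < Suc s \<or> j < Suc s"
  then consider "i < s" | "j < s" | "i = s" | "j = s" by linarith
  then show "deflate s \<sigma> i j = 0"
  proof cases
    case 1 then have "\<sigma> i j = 0" "\<sigma> i s = 0" using assms(2,3) ij unfolding vanishes_before_def by auto
    then show ?thesis by (simp add: deflate_def)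
  next
    case 2 then have "\<sigma> i j = 0" "\<sigma> j s = 0" using assms(2,3) ij unfolding vanishes_before_def by auto
    then show ?thesis by (simp add: deflate_def)
  next
    case 3
    have "\<sigma> s j = cnj (\<sigma> j s)" using assms(1,3) ij(2) unfolding hermitian_def by blast
    then show ?thesis using 3 assms(4) by (simp add: deflate_def)
  next
    case 4
    have "\<sigma> s s = cnj (\<sigma> s s)" using assms(1,3) unfolding hermitian_def by blast
    then show ?thesis using 4 assms(4) by (simp add: deflate_def)
  qed
qed

lemma pos_semidef_deflate:
  assumes herm: "hermitian d \<sigma>" and psd: "pos_semidef d \<sigma>" and "s < d" "\<sigma> s s \<noteq> 0"
  shows "pos_semidef d (deflate s \<sigma>)"
  unfolding pos_semidef_def
proof
  fix v
  define c where "c = Re (\<sigma> s s)"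
  have sc: "\<sigma> s s = of_real c" and "0 < c"
    using pos_semidef_pivot_real[OF herm psd \<open>s < d\<close>] assms(4) unfolding c_def
    by (auto simp: less_eq_real_def)
  have hs: "\<sigma> i s = cnj (\<sigma> s i)" if "i < d" for i
    using herm \<open>s < d\<close> that unfolding hermitian_def by blast
  define g where "g = (\<Sum>j<d. \<sigma> s j * v j)"
  \<comment> \<open>the pivot inequality at the optimal step \<open>t = -g / c\<close> is exactly positivity of the deflation\<close>
  have "0 \<le> Re (quad_form d \<sigma> v) + 2 * Re (cnj (- g / of_real c) * g)
      + (cmod (- g / of_real c))\<^sup>2 * c"
    using pos_semidef_pivot_ineq[OF herm psd \<open>s < d\<close>, of v "- g / of_real c"]
    by (simp add: g_def c_def)
  moreover have "Re (cnj (- g / of_real c) * g) = - ((cmod g)\<^sup>2 / c)"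
    unfolding cmod_power2 by (simp add: power2_eq_square field_simps)
  moreover have "(cmod (- g / of_real c))\<^sup>2 * c = (cmod g)\<^sup>2 / c"
    using \<open>0 < c\<close> by (simp add: norm_divide power2_eq_square field_simps)
  moreover have "quad_form d (deflate s \<sigma>) v = quad_form d \<sigma> v
      - (\<Sum>i<d. \<Sum>j<d. cnj (v i) * (\<sigma> i s * cnj (\<sigma> j s) / of_real c) * v j)"
    unfolding quad_form_def deflate_def sc by (simp add: algebra_simps sum_subtractf)
  moreover have "(\<Sum>i<d. \<Sum>j<d. cnj (v i) * (\<sigma> i s * cnj (\<sigma> j s) / of_real c) * v j)
      = (\<Sum>i<d. cnj (v i) * \<sigma> i s) * (\<Sum>j<d. cnj (\<sigma> j s) * v j) / of_real c"
    by (simp add: sum_distrib_left sum_distrib_right sum_divide_distrib mult_ac)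
  moreover have "(\<Sum>i<d. cnj (v i) * \<sigma> i s) = cnj g" "(\<Sum>j<d. cnj (\<sigma> j s) * v j) = g"
    unfolding g_def using hs by (auto intro!: sum.cong)
  moreover have "cnj g * g / of_real c = of_real ((cmod g)\<^sup>2 / c)"
    by (simp only: of_real_divide complex_norm_square mult.commute)
  ultimately show "0 \<le> Re (quad_form d (deflate s \<sigma>) v)" by simp
qed

lemma gram_decomposition_from:
  assumes "hermitian d \<sigma>" "pos_semidef d \<sigma>" "vanishes_before s d \<sigma>"
  shows "\<exists>ws. \<forall>i<d. \<forall>j<d. \<sigma> i j = (\<Sum>w\<leftarrow>ws. w i * cnj (w j))"
  using assms
proof (induction "d - s" arbitrary: s \<sigma>)
  case 0
  then show ?case by (intro exI[of _ "[]"]) (simp add: vanishes_before_def)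
next
  case (Suc n)
  then have sd: "s < d" and n: "n = d - Suc s" by simp_all
  show ?case
  proof (cases "\<sigma> s s = 0")
    case True
    then show ?thesis
      using Suc.hyps(1)[OF n Suc.prems(1,2)] pos_semidef_zero_pivot[OF Suc.prems sd] by blast
  next
    case False
    define c where "c = Re (\<sigma> s s)"
    have "\<sigma> s s = of_real c" "0 < c"
      using pos_semidef_pivot_real[OF Suc.prems(1,2) sd] False unfolding c_def
      by (auto simp: less_eq_real_def)
    define w where "w = (\<lambda>i. \<sigma> i s / of_real (sqrt c))"
    have "w i * cnj (w j) = \<sigma> i s * cnj (\<sigma> j s) / \<sigma> s s" for i j
    proof -
      have "(complex_of_real (sqrt c))\<^sup>2 = of_real c" using \<open>0 < c\<close> by (simp flip: of_real_power)
      then show ?thesis using \<open>0 < c\<close> \<open>\<sigma> s s = of_real c\<close>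
        by (simp add: w_def field_simps power2_eq_square[symmetric])
    qed
    then have "\<sigma> i j = w i * cnj (w j) + deflate s \<sigma> i j" for i j
      by (simp add: deflate_def)
    moreover obtain ws where "\<forall>i<d. \<forall>j<d. deflate s \<sigma> i j = (\<Sum>w\<leftarrow>ws. w i * cnj (w j))"
      using Suc.hyps(1)[OF n] hermitian_deflate[OF Suc.prems(1) sd]
        pos_semidef_deflate[OF Suc.prems(1,2) sd False]
        vanishes_before_deflate[OF Suc.prems(1,3) sd False] by blast
    ultimately show ?thesis by (intro exI[of _ "w # ws"]) simp
  qed
qed

lemma gram_decomposition:
  assumes "hermitian d \<sigma>" "pos_semidef d \<sigma>"
  obtains W :: "nat \<Rightarrow> nat \<Rightarrow> complex" and K :: nat
  where "\<And>i j. i < d \<Longrightarrow> j < d \<Longrightarrow> \<sigma> i j = (\<Sum>k<K. W k i * cnj (W k j))"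
proof -
  obtain ws where ws: "\<forall>i<d. \<forall>j<d. \<sigma> i j = (\<Sum>w\<leftarrow>ws. w i * cnj (w j))"
    using gram_decomposition_from[OF assms, of 0] by (auto simp: vanishes_before_def)
  have "(\<Sum>w\<leftarrow>ws. w i * cnj (w j)) = (\<Sum>k<length ws. (ws ! k) i * cnj ((ws ! k) j))" for i j
    by (simp add: sum_list_sum_nth atLeast0LessThan)
  then show ?thesis using ws that[of "(!) ws" "length ws"] by simp
qed

section \<open>Tensor products and partial traces of states\<close>

lemma mult_add_less_mult:
  fixes a c m n :: nat
  assumes "a < m" "c < n"
  shows "a * n + c < m * n"
proof -
  have "a * n + c < Suc a * n" using assms(2) by simp
  also have "\<dots> \<le> m * n" using assms(1) by (intro mult_right_mono) auto
  finally show ?thesis .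
qed

lemma sum_sum_gram:
  assumes "\<And>i j. i < n \<Longrightarrow> j < n \<Longrightarrow> \<sigma> i j = (\<Sum>k<K. W k i * cnj (W k j))"
  shows "(\<Sum>c<n. \<Sum>e<n. x c * \<sigma> c e * y e) =
    (\<Sum>k<K. (\<Sum>c<n. x c * W k c) * (\<Sum>e<n. cnj (W k e) * y e))"
proof -
  have "(\<Sum>c<n. \<Sum>e<n. x c * \<sigma> c e * y e) =
      (\<Sum>c<n. \<Sum>e<n. \<Sum>k<K. x c * W k c * (cnj (W k e) * y e))"
    by (intro sum.cong refl) (simp add: assms sum_distrib_left sum_distrib_right mult_ac)
  also have "\<dots> = (\<Sum>c<n. \<Sum>k<K. \<Sum>e<n. x c * W k c * (cnj (W k e) * y e))"
    by (rule sum.cong[OF refl], rule sum.swap)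
  also have "\<dots> = (\<Sum>k<K. \<Sum>c<n. \<Sum>e<n. x c * W k c * (cnj (W k e) * y e))"
    by (rule sum.swap)
  finally show ?thesis by (simp add: sum_product)
qed

lemma quad_form_tensor_gram:
  assumes "\<And>i j. i < dB \<Longrightarrow> j < dB \<Longrightarrow> \<sigma> i j = (\<Sum>k<K. W k i * cnj (W k j))"
  shows "quad_form (dA * dB) (tensor dA dB \<rho> \<sigma>) v =
    (\<Sum>k<K. quad_form dA \<rho> (\<lambda>a. \<Sum>c<dB. cnj (W k c) * v (a * dB + c)))"
proof -
  define U where "U = (\<lambda>k a. \<Sum>c<dB. cnj (W k c) * v (a * dB + c))"
  have U: "(\<Sum>c<dB. cnj (W k c) * v (a * dB + c)) = U k a" for k a
    by (simp add: U_def)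
  have cU: "(\<Sum>c<dB. cnj (v (a * dB + c)) * W k c) = cnj (U k a)" for k a
    by (simp add: U_def mult.commute)
  have dm: "(a * dB + c) div dB = a" "(a * dB + c) mod dB = c" if "c < dB" for a c
    using that by simp_all
  have "quad_form (dA * dB) (tensor dA dB \<rho> \<sigma>) v = (\<Sum>a<dA. \<Sum>c<dB. \<Sum>b<dA. \<Sum>e<dB.
      \<rho> a b * (cnj (v (a * dB + c)) * \<sigma> c e * v (b * dB + e)))"
    unfolding quad_form_def sum_lessThan_mult
    by (intro sum.cong refl) (simp add: tensor_def dm mult_add_less_mult)
  also have "\<dots> = (\<Sum>a<dA. \<Sum>b<dA. \<Sum>c<dB. \<Sum>e<dB.
      \<rho> a b * (cnj (v (a * dB + c)) * \<sigma> c e * v (b * dB + e)))"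
    by (rule sum.cong[OF refl], rule sum.swap)
  also have "\<dots> = (\<Sum>a<dA. \<Sum>b<dA. \<rho> a b * (\<Sum>c<dB. \<Sum>e<dB.
      cnj (v (a * dB + c)) * \<sigma> c e * v (b * dB + e)))"
    by (simp only: sum_distrib_left)
  also have "\<dots> = (\<Sum>a<dA. \<Sum>b<dA. \<rho> a b * (\<Sum>k<K.
      (\<Sum>c<dB. cnj (v (a * dB + c)) * W k c) * (\<Sum>e<dB. cnj (W k e) * v (b * dB + e))))"
    by (simp only: sum_sum_gram[OF assms])
  also have "\<dots> = (\<Sum>a<dA. \<Sum>b<dA. \<Sum>k<K. cnj (U k a) * \<rho> a b * U k b)"
    by (simp only: cU U, simp only: sum_distrib_left mult_ac)
  also have "\<dots> = (\<Sum>a<dA. \<Sum>k<K. \<Sum>b<dA. cnj (U k a) * \<rho> a b * U k b)"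
    by (rule sum.cong[OF refl], rule sum.swap)
  also have "\<dots> = (\<Sum>k<K. quad_form dA \<rho> (U k))"
    unfolding quad_form_def by (rule sum.swap)
  finally show ?thesis unfolding U_def .
qed

lemma tensor_pos_semidef:
  assumes "pos_semidef dA \<rho>" "hermitian dB \<sigma>" "pos_semidef dB \<sigma>"
  shows "pos_semidef (dA * dB) (tensor dA dB \<rho> \<sigma>)"
  unfolding pos_semidef_def
proof
  fix v
  obtain W and K :: nat where W: "\<And>i j. i < dB \<Longrightarrow> j < dB \<Longrightarrow> \<sigma> i j = (\<Sum>k<K. W k i * cnj (W k j))"
    using gram_decomposition[OF assms(2,3)] by blast
  have "0 \<le> Re (quad_form dA \<rho> u)" for u
    using assms(1) unfolding pos_semidef_def by blast
  then have "0 \<le> (\<Sum>k<K. Re (quad_form dA \<rho> (\<lambda>a. \<Sum>c<dB. cnj (W k c) * v (a * dB + c))))"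
    by (intro sum_nonneg)
  then show "0 \<le> Re (quad_form (dA * dB) (tensor dA dB \<rho> \<sigma>) v)"
    by (simp only: quad_form_tensor_gram[OF W] Re_sum)
qed

lemma tensor_is_state:
  assumes A: "is_state dA \<rho>" and B: "is_state dB \<sigma>"
  shows "is_state (dA * dB) (tensor dA dB \<rho> \<sigma>)"
proof -
  have hA: "hermitian dA \<rho>" "pos_semidef dA \<rho>" "(\<Sum>i<dA. \<rho> i i) = 1"
    using A is_state_iff by auto
  have hB: "hermitian dB \<sigma>" "pos_semidef dB \<sigma>" "(\<Sum>i<dB. \<sigma> i i) = 1"
    using B is_state_iff by auto
  have "hermitian (dA * dB) (tensor dA dB \<rho> \<sigma>)" unfolding hermitian_def
  proof (intro allI impI)
    fix i j assume ij: "i < dA * dB" "j < dA * dB"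
    then have "0 < dB" by (cases "dB = 0") auto
    then have "i div dB < dA" "j div dB < dA" "i mod dB < dB" "j mod dB < dB"
      using ij less_mult_imp_div_less by auto
    then have "\<rho> (j div dB) (i div dB) = cnj (\<rho> (i div dB) (j div dB))"
        "\<sigma> (j mod dB) (i mod dB) = cnj (\<sigma> (i mod dB) (j mod dB))"
      using hA(1) hB(1) unfolding hermitian_def by blast+
    then show "tensor dA dB \<rho> \<sigma> j i = cnj (tensor dA dB \<rho> \<sigma> i j)"
      using ij by (simp add: tensor_def)
  qed
  moreover have "(\<Sum>i<dA * dB. tensor dA dB \<rho> \<sigma> i i) = (\<Sum>a<dA. \<rho> a a) * (\<Sum>c<dB. \<sigma> c c)"
    unfolding sum_lessThan_mult sum_product
    by (intro sum.cong refl) (simp add: tensor_def mult_add_less_mult)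
  ultimately show ?thesis
    unfolding is_state_iff using hA hB tensor_pos_semidef[OF hA(2) hB(1,2)]
    by (auto simp: tensor_def)
qed

lemma tpow_is_state: "is_state d \<rho> \<Longrightarrow> is_state (d ^ n) (tpow d n \<rho>)"
proof (induction n)
  case 0
  have "0 \<le> Re (cnj (v 0) * v 0)" for v :: "nat \<Rightarrow> complex"
    by (simp add: complex_mult_cnj[of "v 0", simplified mult.commute])
  then show ?case by (auto simp: is_state_def)
next
  case (Suc n)
  then show ?case using tensor_is_state[OF Suc.prems Suc.IH] by simp
qed

lemma quad_form_ptrace_A:
  "quad_form dB (ptrace_A dA dB \<tau>) v =
    (\<Sum>k<dA. quad_form (dA * dB) \<tau> (\<lambda>i. if i div dB = k then v (i mod dB) else 0))"
proof -
  have block: "quad_form (dA * dB) \<tau> (\<lambda>i. if i div dB = k then v (i mod dB) else 0) =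
      (\<Sum>a<dB. \<Sum>b<dB. cnj (v a) * \<tau> (k * dB + a) (k * dB + b) * v b)" if "k < dA" for k
  proof -
    have "quad_form (dA * dB) \<tau> (\<lambda>i. if i div dB = k then v (i mod dB) else 0) =
      (\<Sum>x<dA. \<Sum>a<dB. \<Sum>y<dA. \<Sum>b<dB. (if x = k then cnj (v a) else 0) *
        \<tau> (x * dB + a) (y * dB + b) * (if y = k then v b else 0))"
      unfolding quad_form_def sum_lessThan_mult by (intro sum.cong refl) simp
    also have "\<dots> = (\<Sum>x<dA. if x = k then (\<Sum>a<dB. \<Sum>y<dA. \<Sum>b<dB.
        cnj (v a) * \<tau> (x * dB + a) (y * dB + b) * (if y = k then v b else 0)) else 0)"
      by (rule sum.cong[OF refl]) simp
    also have "\<dots> = (\<Sum>a<dB. \<Sum>y<dA. \<Sum>b<dB.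
        cnj (v a) * \<tau> (k * dB + a) (y * dB + b) * (if y = k then v b else 0))"
      using that by simp
    also have "\<dots> = (\<Sum>a<dB. \<Sum>y<dA. if y = k then (\<Sum>b<dB.
        cnj (v a) * \<tau> (k * dB + a) (y * dB + b) * v b) else 0)"
      by (rule sum.cong[OF refl], rule sum.cong[OF refl]) simp
    also have "\<dots> = (\<Sum>a<dB. \<Sum>b<dB. cnj (v a) * \<tau> (k * dB + a) (k * dB + b) * v b)"
      using that by simp
    finally show ?thesis .
  qed
  have "quad_form dB (ptrace_A dA dB \<tau>) v =
      (\<Sum>a<dB. \<Sum>b<dB. \<Sum>k<dA. cnj (v a) * \<tau> (k * dB + a) (k * dB + b) * v b)"
    unfolding quad_form_def
    by (intro sum.cong refl) (simp add: ptrace_A_def sum_distrib_left sum_distrib_right)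
  also have "\<dots> = (\<Sum>a<dB. \<Sum>k<dA. \<Sum>b<dB. cnj (v a) * \<tau> (k * dB + a) (k * dB + b) * v b)"
    by (rule sum.cong[OF refl], rule sum.swap)
  also have "\<dots> = (\<Sum>k<dA. \<Sum>a<dB. \<Sum>b<dB. cnj (v a) * \<tau> (k * dB + a) (k * dB + b) * v b)"
    by (rule sum.swap)
  finally show ?thesis using block by simp
qed

lemma ptrace_A_is_state:
  assumes "is_state (dA * dB) \<tau>"
  shows "is_state dB (ptrace_A dA dB \<tau>)"
proof -
  have hT: "hermitian (dA * dB) \<tau>" "pos_semidef (dA * dB) \<tau>" "(\<Sum>i<dA * dB. \<tau> i i) = 1"
    using assms is_state_iff by auto
  have "hermitian dB (ptrace_A dA dB \<tau>)" unfolding hermitian_def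
  proof (intro allI impI)
    fix a b assume ab: "a < dB" "b < dB"
    have "\<tau> (k * dB + b) (k * dB + a) = cnj (\<tau> (k * dB + a) (k * dB + b))" if "k < dA" for k
      using hT(1) mult_add_less_mult[OF that ab(1)] mult_add_less_mult[OF that ab(2)]
      unfolding hermitian_def by blast
    then show "ptrace_A dA dB \<tau> b a = cnj (ptrace_A dA dB \<tau> a b)"
      using ab by (simp add: ptrace_A_def)
  qed
  moreover have "pos_semidef dB (ptrace_A dA dB \<tau>)"
    using hT(2) unfolding pos_semidef_def quad_form_ptrace_A Re_sum by (auto intro: sum_nonneg)
  moreover have "(\<Sum>a<dB. ptrace_A dA dB \<tau> a a) = (\<Sum>i<dA * dB. \<tau> i i)"
    by (simp add: ptrace_A_def sum_lessThan_mult sum.swap[of _ "{..<dB}"])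
  ultimately show ?thesis
    unfolding is_state_iff using hT(3) by (auto simp: ptrace_A_def)
qed

section \<open>Single-copy marginals\<close>

lemma digit_Suc_0:
  assumes "x2 < d ^ m"
  shows "digit d (Suc m) 0 (x1 * d ^ m + x2) = x1 mod d"
proof -
  have "d ^ m \<noteq> 0" using assms by (metis less_nat_zero_code)
  then have "(x2 + x1 * d ^ m) div d ^ m = x1 + x2 div d ^ m"
    by (rule div_mult_self1)
  then show ?thesis using assms by (simp add: digit_def add.commute)
qed

lemma digit_Suc_Suc:
  assumes "0 < d" "l < m"
  shows "digit d (Suc m) (Suc l) (x1 * d ^ m + x2) = digit d m l x2"
proof -
  define e where "e = m - 1 - l"
  have "m = e + Suc l" using assms(2) unfolding e_def by simp
  then have eq: "x1 * d ^ m + x2 = x2 + (x1 * d ^ l * d) * d ^ e" by (simp add: power_add mult_ac)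
  have "d ^ e \<noteq> 0" using assms(1) by simp
  then have "(x1 * d ^ m + x2) div d ^ e = x1 * d ^ l * d + x2 div d ^ e"
    unfolding eq by (rule div_mult_self1)
  moreover have "Suc m - 1 - Suc l = e" unfolding e_def by simp
  ultimately show ?thesis unfolding digit_def e_def[symmetric] by simp
qed

lemma digits_eq_imp_eq:
  assumes "0 < d" "x < d ^ m" "y < d ^ m" "\<forall>l<m. digit d m l x = digit d m l y"
  shows "x = y"
  using assms(2-4)
proof (induction m arbitrary: x y)
  case 0 then show ?case by simp
next
  case (Suc m)
  have x: "x = (x div d ^ m) * d ^ m + x mod d ^ m" and y: "y = (y div d ^ m) * d ^ m + y mod d ^ m"
    by (rule div_mult_mod_eq[symmetric])+
  have mod: "x mod d ^ m < d ^ m" "y mod d ^ m < d ^ m" using assms(1) by simp_all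
  have "x div d ^ m < d" "y div d ^ m < d"
    using Suc.prems(1,2) less_mult_imp_div_less by (simp_all add: mult.commute)
  moreover have "digit d (Suc m) 0 x = digit d (Suc m) 0 y" using Suc.prems(3) by simp
  ultimately have "x div d ^ m = y div d ^ m"
    using digit_Suc_0[OF mod(1), of "x div d ^ m"] digit_Suc_0[OF mod(2), of "y div d ^ m"] x y
    by simp
  moreover have "x mod d ^ m = y mod d ^ m"
  proof (rule Suc.IH[OF mod], intro allI impI)
    fix l assume "l < m"
    then have "digit d (Suc m) (Suc l) x = digit d (Suc m) (Suc l) y" using Suc.prems(3) by simp
    then show "digit d m l (x mod d ^ m) = digit d m l (y mod d ^ m)"
      using digit_Suc_Suc[OF assms(1) \<open>l < m\<close>, of "x div d ^ m" "x mod d ^ m"]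
        digit_Suc_Suc[OF assms(1) \<open>l < m\<close>, of "y div d ^ m" "y mod d ^ m"] x y by simp
  qed
  ultimately show ?case using x y by metis
qed

lemma sum_if_const: "(\<Sum>i\<in>S. if P then f i else 0) = (if P then \<Sum>i\<in>S. f i else 0)"
  by simp

lemma marg_Suc_split:
  assumes "a < d" "b < d"
  shows "marg d (Suc m) k \<omega> a b = (\<Sum>x1<d. \<Sum>x2<d ^ m. \<Sum>y1<d. \<Sum>y2<d ^ m.
    if digit d (Suc m) k (x1 * d ^ m + x2) = a \<and> digit d (Suc m) k (y1 * d ^ m + y2) = b \<and>
       (\<forall>l<Suc m. l \<noteq> k \<longrightarrow>
          digit d (Suc m) l (x1 * d ^ m + x2) = digit d (Suc m) l (y1 * d ^ m + y2))
    then \<omega> (x1 * d ^ m + x2) (y1 * d ^ m + y2) else 0)"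
  using assms by (simp add: marg_def sum_lessThan_mult)

lemma marg_0_eq_ptrace_B:
  assumes "0 < d"
  shows "marg d (Suc m) 0 \<omega> = ptrace_B d (d ^ m) \<omega>"
proof (intro ext)
  fix a b
  show "marg d (Suc m) 0 \<omega> a b = ptrace_B d (d ^ m) \<omega> a b"
  proof (cases "a < d \<and> b < d")
    case False then show ?thesis by (auto simp: marg_def ptrace_B_def)
  next
    case True
    have cond: "(digit d (Suc m) 0 (x1 * d ^ m + x2) = a \<and> digit d (Suc m) 0 (y1 * d ^ m + y2) = b \<and>
        (\<forall>l<Suc m. l \<noteq> 0 \<longrightarrow>
           digit d (Suc m) l (x1 * d ^ m + x2) = digit d (Suc m) l (y1 * d ^ m + y2)))
        \<longleftrightarrow> x1 = a \<and> y1 = b \<and> x2 = y2"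
      if "x1 < d" "x2 < d ^ m" "y1 < d" "y2 < d ^ m" for x1 x2 y1 y2
    proof -
      have "(\<forall>l<Suc m. l \<noteq> 0 \<longrightarrow>
            digit d (Suc m) l (x1 * d ^ m + x2) = digit d (Suc m) l (y1 * d ^ m + y2))
          \<longleftrightarrow> (\<forall>l<m. digit d m l x2 = digit d m l y2)"
        unfolding All_less_Suc2 using digit_Suc_Suc[OF assms] by simp
      also have "\<dots> \<longleftrightarrow> x2 = y2" using digits_eq_imp_eq[OF assms that(2,4)] by auto
      finally show ?thesis using digit_Suc_0[OF that(2)] digit_Suc_0[OF that(4)] that by simp
    qed
    have pt: "(if digit d (Suc m) 0 (x1 * d ^ m + x2) = a \<and> digit d (Suc m) 0 (y1 * d ^ m + y2) = b \<and>
        (\<forall>l<Suc m. l \<noteq> 0 \<longrightarrow>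
           digit d (Suc m) l (x1 * d ^ m + x2) = digit d (Suc m) l (y1 * d ^ m + y2))
        then \<omega> (x1 * d ^ m + x2) (y1 * d ^ m + y2) else 0) =
      (if y1 = b then if y2 = x2 then if x1 = a then \<omega> (x1 * d ^ m + x2) (y1 * d ^ m + y2)
        else 0 else 0 else 0)"
      if "x1 \<in> {..<d}" "x2 \<in> {..<d ^ m}" "y1 \<in> {..<d}" "y2 \<in> {..<d ^ m}" for x1 x2 y1 y2
      using cond[of x1 x2 y1 y2] that by auto
    have "marg d (Suc m) 0 \<omega> a b = (\<Sum>x1<d. \<Sum>x2<d ^ m. \<Sum>y1<d. \<Sum>y2<d ^ m.
        if y1 = b then if y2 = x2 then if x1 = a then \<omega> (x1 * d ^ m + x2) (y1 * d ^ m + y2)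
        else 0 else 0 else 0)"
      unfolding marg_Suc_split[OF True[THEN conjunct1] True[THEN conjunct2]]
      by (rule sum.cong[OF refl], rule sum.cong[OF refl], rule sum.cong[OF refl],
          rule sum.cong[OF refl], rule pt)
    also have "\<dots> = (\<Sum>x1<d. \<Sum>x2<d ^ m. if x1 = a then \<omega> (x1 * d ^ m + x2) (b * d ^ m + x2) else 0)"
      using True by (simp add: sum_if_const)
    also have "\<dots> = (\<Sum>x2<d ^ m. \<omega> (a * d ^ m + x2) (b * d ^ m + x2))"
      using True by (simp add: sum_if_const sum.swap[of _ "{..<d}"])
    finally show ?thesis using True by (simp add: ptrace_B_def)
  qed
qed

lemma marg_ptrace_A:
  assumes "0 < d" "k < m"
  shows "marg d m k (ptrace_A d (d ^ m) \<omega>) = marg d (Suc m) (Suc k) \<omega>"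
proof (intro ext)
  fix a b
  define C where "C = (\<lambda>x y. digit d m k x = a \<and> digit d m k y = b \<and>
     (\<forall>l<m. l \<noteq> k \<longrightarrow> digit d m l x = digit d m l y))"
  show "marg d m k (ptrace_A d (d ^ m) \<omega>) a b = marg d (Suc m) (Suc k) \<omega> a b"
  proof (cases "a < d \<and> b < d")
    case False then show ?thesis by (auto simp: marg_def)
  next
    case True
    have pt: "(if digit d (Suc m) (Suc k) (x1 * d ^ m + x2) = a \<and>
          digit d (Suc m) (Suc k) (y1 * d ^ m + y2) = b \<and>
          (\<forall>l<Suc m. l \<noteq> Suc k \<longrightarrow>
             digit d (Suc m) l (x1 * d ^ m + x2) = digit d (Suc m) l (y1 * d ^ m + y2))
        then \<omega> (x1 * d ^ m + x2) (y1 * d ^ m + y2) else 0) =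
      (if y1 = x1 then if C x2 y2 then \<omega> (x1 * d ^ m + x2) (y1 * d ^ m + y2) else 0 else 0)"
      if "x1 \<in> {..<d}" "x2 \<in> {..<d ^ m}" "y1 \<in> {..<d}" "y2 \<in> {..<d ^ m}" for x1 x2 y1 y2
    proof -
      have "(\<forall>l<Suc m. l \<noteq> Suc k \<longrightarrow>
            digit d (Suc m) l (x1 * d ^ m + x2) = digit d (Suc m) l (y1 * d ^ m + y2))
        \<longleftrightarrow> x1 = y1 \<and> (\<forall>l<m. l \<noteq> k \<longrightarrow> digit d m l x2 = digit d m l y2)"
        unfolding All_less_Suc2 using that digit_Suc_0 digit_Suc_Suc[OF assms(1)] by simp
      moreover have "digit d (Suc m) (Suc k) (x1 * d ^ m + x2) = digit d m k x2"
          "digit d (Suc m) (Suc k) (y1 * d ^ m + y2) = digit d m k y2"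
        using digit_Suc_Suc[OF assms] by auto
      ultimately show ?thesis unfolding C_def by auto
    qed
    have "marg d (Suc m) (Suc k) \<omega> a b = (\<Sum>x1<d. \<Sum>x2<d ^ m. \<Sum>y1<d. \<Sum>y2<d ^ m.
        if y1 = x1 then if C x2 y2 then \<omega> (x1 * d ^ m + x2) (y1 * d ^ m + y2) else 0 else 0)"
      unfolding marg_Suc_split[OF True[THEN conjunct1] True[THEN conjunct2]]
      by (rule sum.cong[OF refl], rule sum.cong[OF refl], rule sum.cong[OF refl],
          rule sum.cong[OF refl], rule pt)
    also have "\<dots> = (\<Sum>x1<d. \<Sum>x2<d ^ m. \<Sum>y2<d ^ m.
        if C x2 y2 then \<omega> (x1 * d ^ m + x2) (x1 * d ^ m + y2) else 0)"
      by (rule sum.cong[OF refl], rule sum.cong[OF refl]) (simp add: sum_if_const)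
    also have "\<dots> = (\<Sum>x2<d ^ m. \<Sum>y2<d ^ m. \<Sum>x1<d.
        if C x2 y2 then \<omega> (x1 * d ^ m + x2) (x1 * d ^ m + y2) else 0)"
      by (subst sum.swap, rule sum.cong[OF refl], rule sum.swap)
    also have "\<dots> = (\<Sum>x<d ^ m. \<Sum>y<d ^ m. if C x y then ptrace_A d (d ^ m) \<omega> x y else 0)"
      by (intro sum.cong refl) (simp add: sum_if_const ptrace_A_def)
    also have "\<dots> = marg d m k (ptrace_A d (d ^ m) \<omega>) a b"
      using True by (simp add: marg_def C_def)
    finally show ?thesis by (rule sym)
  qed
qed

section \<open>Monotones and rates\<close>

lemma is_state_dim_pos: "is_state d \<rho> \<Longrightarrow> 0 < d"
  by (cases d) (auto simp: is_state_def)

lemma R_tpow: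
  assumes additive: "\<forall>dA dB \<omega> \<omega>'. is_state dA \<omega> \<longrightarrow> is_state dB \<omega>' \<longrightarrow>
                       R (dA * dB) (tensor dA dB \<omega> \<omega>') = R dA \<omega> + R dB \<omega>'"
    and st: "is_state d \<rho>"
  shows "R (d ^ n) (tpow d n \<rho>) = real n * R d \<rho>"
proof (induction n)
  case 0
  \<comment> \<open>the one-dimensional state is its own tensor square, so additivity forces the value 0\<close>
  define e where "e = tpow d 0 \<rho>"
  have "is_state 1 e" using tpow_is_state[OF st, of 0] by (simp add: e_def)
  moreover have "tensor 1 1 e e = e" by (intro ext) (simp add: tensor_def e_def)
  ultimately have "R 1 e = R 1 e + R 1 e" using additive by (metis mult_1)
  then show ?case by (simp add: e_def)
next
  case (Suc n)
  have "R (d ^ Suc n) (tpow d (Suc n) \<rho>) = R d \<rho> + R (d ^ n) (tpow d n \<rho>)"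
    using additive st tpow_is_state[OF st, of n] by simp
  then show ?case using Suc by (simp add: algebra_simps)
qed

lemma sum_R_marg_le:
  fixes R :: "nat \<Rightarrow> cmat \<Rightarrow> real"
  assumes nonneg: "\<forall>dA \<omega>. is_state dA \<omega> \<longrightarrow> 0 \<le> R dA \<omega>"
    and superadditive: "\<forall>dA dB \<tau>. is_state (dA * dB) \<tau> \<longrightarrow>
                          R dA (ptrace_B dA dB \<tau>) + R dB (ptrace_A dA dB \<tau>) \<le> R (dA * dB) \<tau>"
    and "is_state (d ^ m) \<omega>"
  shows "(\<Sum>i<m. R d (marg d m i \<omega>)) \<le> R (d ^ m) \<omega>"
  using assms(3)
proof (induction m arbitrary: \<omega>)
  case 0
  then show ?case using nonneg by simp
next
  case (Suc m)
  then have st: "is_state (d * d ^ m) \<omega>" by simp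
  then have "0 < d" using is_state_dim_pos by (metis mult_eq_0_iff neq0_conv)
  have "(\<Sum>i<Suc m. R d (marg d (Suc m) i \<omega>)) =
      R d (marg d (Suc m) 0 \<omega>) + (\<Sum>i<m. R d (marg d (Suc m) (Suc i) \<omega>))"
    by (rule sum.lessThan_Suc_shift)
  also have "\<dots> = R d (ptrace_B d (d ^ m) \<omega>) + (\<Sum>i<m. R d (marg d m i (ptrace_A d (d ^ m) \<omega>)))"
    by (simp add: marg_0_eq_ptrace_B[OF \<open>0 < d\<close>] marg_ptrace_A[OF \<open>0 < d\<close>])
  also have "\<dots> \<le> R d (ptrace_B d (d ^ m) \<omega>) + R (d ^ m) (ptrace_A d (d ^ m) \<omega>)"
    using Suc.IH[OF ptrace_A_is_state[OF st]] by (rule add_left_mono)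
  also have "\<dots> \<le> R (d ^ Suc m) \<omega>"
    using superadditive st by simp
  finally show ?case .
qed

lemma achievable_rate_bound:
  assumes channels: "\<forall>(a, b, \<Lambda>) \<in> Ops. \<forall>\<omega>. is_state a \<omega> \<longrightarrow> is_state b (\<Lambda> \<omega>)"
    and nonneg: "\<forall>dA \<omega>. is_state dA \<omega> \<longrightarrow> 0 \<le> R dA \<omega>"
    and monotone: "\<forall>(a, b, \<Lambda>) \<in> Ops. \<forall>\<omega>. is_state a \<omega> \<longrightarrow> R b (\<Lambda> \<omega>) \<le> R a \<omega>"
    and additive: "\<forall>dA dB \<omega> \<omega>'. is_state dA \<omega> \<longrightarrow> is_state dB \<omega>' \<longrightarrow>
                     R (dA * dB) (tensor dA dB \<omega> \<omega>') = R dA \<omega> + R dB \<omega>'"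
    and superadditive: "\<forall>dA dB \<tau>. is_state (dA * dB) \<tau> \<longrightarrow>
                     R dA (ptrace_B dA dB \<tau>) + R dB (ptrace_A dA dB \<tau>) \<le> R (dA * dB) \<tau>"
    and st: "is_state d \<rho>"
    and "achievable Ops d \<rho> d' \<rho>' n q"
  shows "real (nat \<lfloor>q * real n\<rfloor>) * R d' \<rho>' \<le> real n * R d \<rho>"
proof -
  define m where "m = nat \<lfloor>q * real n\<rfloor>"
  obtain \<Lambda> where \<Lambda>: "(d ^ n, d' ^ m, \<Lambda>) \<in> Ops"
    and marg: "\<forall>i<m. marg d' m i (\<Lambda> (tpow d n \<rho>)) = \<rho>'"
    using assms(7) unfolding achievable_def m_def by blast
  have "is_state (d ^ n) (tpow d n \<rho>)" using tpow_is_state[OF st] .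
  moreover from this have "is_state (d' ^ m) (\<Lambda> (tpow d n \<rho>))" using channels \<Lambda> by blast
  ultimately have "(\<Sum>i<m. R d' (marg d' m i (\<Lambda> (tpow d n \<rho>)))) \<le> R (d ^ n) (tpow d n \<rho>)"
    using sum_R_marg_le[OF nonneg superadditive] monotone \<Lambda> by fastforce
  then show ?thesis using marg unfolding m_def[symmetric] R_tpow[OF additive st] by simp
qed

lemma frequently_less_limsup:
  fixes f :: "nat \<Rightarrow> 'a :: complete_linorder"
  assumes "y < limsup f"
  shows "\<exists>\<^sub>F n in sequentially. y < f n"
proof (rule ccontr)
  assume "\<not> (\<exists>\<^sub>F n in sequentially. y < f n)"
  then have "limsup f \<le> y"
    by (intro Limsup_bounded) (simp add: not_frequently not_less)
  then show False using assms by simp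
qed

lemma ereal_mult_le_of_forall_less:
  assumes "0 \<le> c" "0 \<le> b" "\<And>r. ereal r < T \<Longrightarrow> r * c \<le> b"
  shows "T * ereal c \<le> ereal b"
proof (cases "c = 0")
  case True then show ?thesis using assms(2) by (simp add: zero_ereal_def[symmetric])
next
  case False
  with assms(1) have "0 < c" by simp
  have "T \<le> ereal (b / c)"
  proof (rule dense_le)
    fix y assume "y < T"
    then show "y \<le> ereal (b / c)"
      using assms(3) \<open>0 < c\<close> by (cases y) (auto simp: field_simps)
  qed
  then have "T * ereal c \<le> ereal (b / c) * ereal c"
    using \<open>0 < c\<close> by (intro ereal_mult_right_mono) auto
  then show ?thesis using \<open>0 < c\<close> by simp
qed

lemma rate_mult_R_le:
  fixes Ops :: ops and R :: "nat \<Rightarrow> cmat \<Rightarrow> real" and r :: real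
  assumes channels: "\<forall>(a, b, \<Lambda>) \<in> Ops. \<forall>\<omega>. is_state a \<omega> \<longrightarrow> is_state b (\<Lambda> \<omega>)"
    and nonneg: "\<forall>dA \<omega>. is_state dA \<omega> \<longrightarrow> 0 \<le> R dA \<omega>"
    and monotone: "\<forall>(a, b, \<Lambda>) \<in> Ops. \<forall>\<omega>. is_state a \<omega> \<longrightarrow> R b (\<Lambda> \<omega>) \<le> R a \<omega>"
    and additive: "\<forall>dA dB \<omega> \<omega>'. is_state dA \<omega> \<longrightarrow> is_state dB \<omega>' \<longrightarrow>
                     R (dA * dB) (tensor dA dB \<omega> \<omega>') = R dA \<omega> + R dB \<omega>'"
    and superadditive: "\<forall>dA dB \<tau>. is_state (dA * dB) \<tau> \<longrightarrow>
                     R dA (ptrace_B dA dB \<tau>) + R dB (ptrace_A dA dB \<tau>) \<le> R (dA * dB) \<tau>"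
    and st: "is_state d \<rho>" and st': "is_state d' \<rho>'"
    and r: "ereal r < Rtilde0 Ops d \<rho> d' \<rho>'"
  shows "r * R d' \<rho>' \<le> R d \<rho>"
proof -
  obtain r' where "r < r'" "ereal r' < Rtilde0 Ops d \<rho> d' \<rho>'"
    using ereal_dense2[OF r] by auto
  obtain N :: nat where N: "1 / (r' - r) < real N" using reals_Archimedean2 by blast
  have "\<exists>\<^sub>F n in sequentially. ereal r' < Sup {ereal q | q. achievable Ops d \<rho> d' \<rho>' n q}"
    using frequently_less_limsup \<open>ereal r' < _\<close> unfolding Rtilde0_def by blast
  then obtain n where "n \<ge> Suc N" "ereal r' < Sup {ereal q | q. achievable Ops d \<rho> d' \<rho>' n q}"
    unfolding frequently_sequentially by blast
  then obtain q where q: "achievable Ops d \<rho> d' \<rho>' n q" "r' < q"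
    unfolding less_Sup_iff by auto
  \<comment> \<open>blocklength \<open>n\<close> is large enough that the rounding loss \<open>1/n\<close> stays below \<open>r' - r\<close>\<close>
  have "0 < real n" using \<open>n \<ge> Suc N\<close> by simp
  have "1 / (r' - r) < real n" using N \<open>n \<ge> Suc N\<close> by linarith
  then have "1 / real n < r' - r" using \<open>r < r'\<close> \<open>0 < real n\<close> by (simp add: field_simps)
  then have "r \<le> q - 1 / real n" using q(2) by linarith
  have "0 \<le> R d' \<rho>'" using nonneg st' by blast
  have "(q - 1 / real n) * real n \<le> real (nat \<lfloor>q * real n\<rfloor>)"
    using q(1) \<open>0 < real n\<close> by (simp add: achievable_def algebra_simps) linarith
  then have "(q - 1 / real n) * real n * R d' \<rho>' \<le> real n * R d \<rho>"
    using achievable_rate_bound[OF channels nonneg monotone additive superadditive st q(1)]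
      \<open>0 \<le> R d' \<rho>'\<close> by (meson mult_right_mono order_trans)
  then have "(q - 1 / real n) * R d' \<rho>' \<le> R d \<rho>"
    using \<open>0 < real n\<close> by (simp add: mult_ac)
  moreover have "r * R d' \<rho>' \<le> (q - 1 / real n) * R d' \<rho>'"
    using \<open>r \<le> q - 1 / real n\<close> \<open>0 \<le> R d' \<rho>'\<close> by (rule mult_right_mono)
  ultimately show ?thesis by linarith
qed

theorem mainTheorem13:
  fixes Ops :: ops and R :: "nat \<Rightarrow> cmat \<Rightarrow> real"
    and d d' :: nat and \<rho> \<rho>' :: cmat and r :: real
  assumes channels: "\<forall>(a, b, \<Lambda>) \<in> Ops. \<forall>\<omega>. is_state a \<omega> \<longrightarrow> is_state b (\<Lambda> \<omega>)"
    and nonneg: "\<forall>dA \<omega>. is_state dA \<omega> \<longrightarrow> 0 \<le> R dA \<omega>"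
    and monotone: "\<forall>(a, b, \<Lambda>) \<in> Ops. \<forall>\<omega>. is_state a \<omega> \<longrightarrow> R b (\<Lambda> \<omega>) \<le> R a \<omega>"
    and additive: "\<forall>dA dB \<omega> \<omega>'. is_state dA \<omega> \<longrightarrow> is_state dB \<omega>' \<longrightarrow>
                     R (dA * dB) (tensor dA dB \<omega> \<omega>') = R dA \<omega> + R dB \<omega>'"
    and superadditive: "\<forall>dA dB \<tau>. is_state (dA * dB) \<tau> \<longrightarrow>
                     R dA (ptrace_B dA dB \<tau>) + R dB (ptrace_A dA dB \<tau>) \<le> R (dA * dB) \<tau>"
    and st: "is_state d \<rho>" and st': "is_state d' \<rho>'"
    and r: "ereal r < Rtilde0 Ops d \<rho> d' \<rho>'"
  shows "r * R d' \<rho>' \<le> R d \<rho> \<and> Rtilde0 Ops d \<rho> d' \<rho>' * ereal (R d' \<rho>') \<le> ereal (R d \<rho>)"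
proof
  note bound = rate_mult_R_le[OF channels nonneg monotone additive superadditive st st']
  show "r * R d' \<rho>' \<le> R d \<rho>" using bound[OF r] .
  show "Rtilde0 Ops d \<rho> d' \<rho>' * ereal (R d' \<rho>') \<le> ereal (R d \<rho>)"
    using nonneg st st' bound by (intro ereal_mult_le_of_forall_less) auto
qed

end
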